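(* Let $p$ be an odd prime, $v$ an integer with $1<v<p-1$, $g\in\{2,\dots,p-1\}$ a primitive root modulo $p$, and $t\ge1$. For $z\in\{0,\dots,v-1\}^t$ let $\lambda(z)=\#\{x\in\{0,\dots,p-2\}:\ (g^{x+\iota}\,\%\,p)\,\%\,v=z(\iota)\ \forall\,0\le\iota<t\}$. If $p\ge v\,g^{t-1}$ and $g\ge v$, then $\lambda(z)>0$ for all $z\in\{0,\dots,v-1\}^t$.
   Context: $x\,\%\,m$ denotes the least nonnegative remainder of the integer $x$ modulo $m$. *)

theory Defs
  imports "HOL-Number_Theory.Number_Theory"
begin

definition lam :: "nat \<Rightarrow> nat \<Rightarrow> nat \<Rightarrow> nat \<Rightarrow> (nat \<Rightarrow> nat) \<Rightarrow> nat" where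
  "lam p v g t z = card {x \<in> {0..p-2}. \<forall>i<t. (g ^ (x + i) mod p) mod v = z i}"

end

theory Submission imports Defs begin

text \<open>Since g is a primitive root, the windows of t consecutive values g^(x+i) mod p are
exactly the sequences w g^i mod p for w = 1, ..., p-1, so it suffices to find such a w.
Put D = g^(t-1) and K = (w D) div p. Then (w g^i) div p = K div g^(t-1-i), hence
w g^i mod p = w g^i - p (K div g^(t-1-i)). As g \<ge> v, the base-g digits of K < D
can be chosen so that every K div g^j has a prescribed residue modulo v; and as p > v D, the
interval of all w with (w D) div p = K has length p/D > v, so w can also be chosen
congruent to z 0 modulo v. Inverting p modulo v then solves all t congruences at once.\<close>

lemma exists_shift_with_residue:
  fixes m v :: nat and a :: int
  assumes "0 < v"
  shows "\<exists>r<v. [int (m + r) = a] (mod int v)"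
proof -
  define r where "r = nat ((a - int m) mod int v)"
  have r: "int r = (a - int m) mod int v"
    unfolding r_def using assms by simp
  have "r < v"
    using r assms by (metis of_nat_0_less_iff of_nat_less_iff pos_mod_bound)
  moreover have "[int (m + r) = a] (mod int v)"
    unfolding cong_def using r by (simp add: mod_add_right_eq)
  ultimately show ?thesis by blast
qed

lemma exists_quotients_with_residues:
  fixes g v n :: nat and c :: "nat \<Rightarrow> int"
  assumes "0 < v" "v \<le> g"
  shows "\<exists>K < g ^ n. \<forall>j<n. [int (K div g ^ j) = c j] (mod int v)"
proof (induction n arbitrary: c)
  case 0
  then show ?case by simp
next
  case (Suc n)
  obtain K0 where K0: "K0 < g ^ n" "\<forall>j<n. [int (K0 div g ^ j) = c (Suc j)] (mod int v)"
    using Suc.IH[of "\<lambda>j. c (Suc j)"] by blast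
  obtain d where d: "d < v" "[int (g * K0 + d) = c 0] (mod int v)"
    using exists_shift_with_residue assms(1) by blast
  define K where "K = g * K0 + d"
  have "K < g * (K0 + 1)"
    unfolding K_def using d(1) assms(2) by simp
  also have "\<dots> \<le> g ^ Suc n"
    using K0(1) by (metis Suc_eq_plus1 Suc_leI mult_le_mono2 power_Suc)
  finally have "K < g ^ Suc n" .
  moreover have "K div g = K0"
    unfolding K_def using d(1) assms(2) by simp
  then have "K div g ^ Suc j = K0 div g ^ j" for j
    by (simp add: div_mult2_eq)
  then have "[int (K div g ^ j) = c j] (mod int v)" if "j < Suc n" for j
    using that d(2) K0(2) unfolding K_def by (cases j) auto
  ultimately show ?case by blast
qed

lemma exists_in_interval_with_residue:
  fixes D v p K :: nat and a :: int
  assumes "0 < D" "0 < v" "D * v < p"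
  shows "\<exists>w. K * p < D * w \<and> D * w < (K + 1) * p \<and> [int w = a] (mod int v)"
proof -
  define m where "m = K * p div D"
  obtain r where r: "r < v" "[int (m + 1 + r) = a] (mod int v)"
    using exists_shift_with_residue assms(2) by blast
  have "D * m + K * p mod D = K * p"
    unfolding m_def by (rule mult_div_mod_eq)
  moreover have "K * p mod D < D"
    using assms(1) by simp
  moreover have "D * (m + 1 + r) = D * m + D * (r + 1)"
    by (simp add: algebra_simps)
  moreover have "D * (r + 1) \<le> D * v"
    using r(1) by (intro mult_le_mono2) simp
  ultimately have "K * p < D * (m + 1 + r)" "D * (m + 1 + r) < (K + 1) * p"
    using assms(3) by auto
  then show ?thesis
    using r(2) by blast
qed

lemma div_power_shift:
  fixes w g p :: nat
  assumes "0 < g" "i \<le> n"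
  shows "w * g ^ i div p = (w * g ^ n div p) div g ^ (n - i)"
proof -
  have "g ^ n = g ^ i * g ^ (n - i)"
    using assms(2) by (simp flip: power_add)
  then show ?thesis
    using assms(1) by (simp add: div_mult2_eq[symmetric] mult.assoc)
qed

lemma cong_mod_by_quotient:
  fixes x y r p :: nat and v q :: int
  assumes "[int p * q = 1] (mod v)"
    and "[int x = int y] (mod v)"
    and "[int (x div p) = q * (int y - int r)] (mod v)"
  shows "[int (x mod p) = int r] (mod v)"
proof -
  have "int (x mod p) = int x - int p * int (x div p)"
    by (simp add: of_nat_mod minus_div_mult_eq_mod[symmetric] of_nat_div algebra_simps)
  also have "[\<dots> = int y - (int p * q) * (int y - int r)] (mod v)"
    using assms(2,3) by (metis cong_diff cong_mult cong_refl mult.assoc)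
  also have "[int y - (int p * q) * (int y - int r) = int y - 1 * (int y - int r)] (mod v)"
    using assms(1) by (intro cong_diff cong_mult cong_refl)
  finally show ?thesis by simp
qed

lemma exists_multiplier_with_residues:
  fixes p v g n :: nat and z :: "nat \<Rightarrow> nat"
  assumes "coprime p v" "0 < v" "v \<le> g" "v * g ^ n < p"
  shows "\<exists>w. 0 < w \<and> w < p \<and> (\<forall>i\<le>n. [w * g ^ i mod p = z i] (mod v))"
proof -
  define D where "D = g ^ n"
  have "0 < g" "0 < D" "D * v < p"
    using assms(2-4) unfolding D_def by (simp_all add: mult.commute)
  obtain q :: int where q: "[int p * q = 1] (mod int v)"
    using cong_solve_coprime_int assms(1) by (metis coprime_int_iff)
  define c where "c i = q * (int (z 0 * g ^ i) - int (z i))" for i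
  obtain K where K: "K < D" "\<forall>j<n. [int (K div g ^ j) = c (n - j)] (mod int v)"
    using exists_quotients_with_residues[where c="\<lambda>j. c (n - j)" and n=n] assms(2,3)
    unfolding D_def by blast
  have digits: "[int (K div g ^ (n - i)) = c i] (mod int v)" if "i \<le> n" for i
  proof (cases "i = 0")
    case True
    then show ?thesis
      using K(1) unfolding D_def c_def by simp
  next
    case False
    then have "n - i < n"
      using that by simp
    then show ?thesis
      using K(2) that by (metis diff_diff_cancel)
  qed
  obtain w where w: "K * p < D * w" "D * w < (K + 1) * p" "[int w = int (z 0)] (mod int v)"
    using exists_in_interval_with_residue[OF \<open>0 < D\<close> assms(2) \<open>D * v < p\<close>] by blast
  have quotient: "w * D div p = K"
    using w(1,2) by (intro div_nat_eqI) (simp_all add: ac_simps)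
  have "[w * g ^ i mod p = z i] (mod v)" if "i \<le> n" for i
  proof -
    have "w * g ^ i div p = K div g ^ (n - i)"
      using div_power_shift[OF \<open>0 < g\<close> that] quotient unfolding D_def by simp
    then have "[int (w * g ^ i div p) = q * (int (z 0 * g ^ i) - int (z i))] (mod int v)"
      using digits[OF that] unfolding c_def by simp
    moreover have "[int (w * g ^ i) = int (z 0 * g ^ i)] (mod int v)"
      using cong_mult[OF w(3) cong_refl[of "int (g ^ i)"]] by simp
    ultimately have "[int (w * g ^ i mod p) = int (z i)] (mod int v)"
      using q by (intro cong_mod_by_quotient)
    then show ?thesis
      by (simp add: cong_int_iff)
  qed
  moreover have "0 < w"
    using w(1) by (cases "w = 0") auto
  moreover have "w < p"
  proof -
    have "(K + 1) * p \<le> D * p"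
      using K(1) by (intro mult_le_mono1) simp
    then have "D * w < D * p"
      using w(2) by linarith
    then show ?thesis by simp
  qed
  ultimately show ?thesis by blast
qed

lemma primroot_power_mod_surj:
  fixes p g w :: nat
  assumes "prime p" "residue_primroot p g" "0 < w" "w < p"
  obtains x where "x < p - 1" "g ^ x mod p = w"
proof -
  have "w \<in> totatives p"
    using assms(3,4) totatives_prime[OF assms(1)] by simp
  then have "w \<in> (\<lambda>i. g ^ i mod p) ` {..<totient p}"
    using residue_primroot_is_generator[OF prime_gt_1_nat[OF assms(1)] assms(2)]
    by (simp add: bij_betw_def)
  then show ?thesis
    using that totient_prime[OF assms(1)] by auto
qed

theorem corollary5:
  fixes p v g t :: nat and z :: "nat \<Rightarrow> nat"
  assumes "prime p" and "odd p"
    and "1 < v" and "v < p - 1"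
    and "g \<in> {2..p-1}" and "residue_primroot p g"
    and "t \<ge> 1"
    and "p \<ge> v * g ^ (t - 1)" and "g \<ge> v"
    and "\<forall>i<t. z i < v"
  shows "lam p v g t z > 0"
proof -
  have "\<not> p dvd v"
    using assms(3,4) by (auto dest: dvd_imp_le)
  then have coprime: "coprime p v"
    using assms(1) by (simp add: prime_imp_coprime)
  have "\<not> v dvd p"
    using assms(1,3,4) prime_nat_iff by auto
  then have small: "v * g ^ (t - 1) < p"
    using assms(8) by (auto simp: order_le_less)
  obtain w where w: "0 < w" "w < p" "\<forall>i\<le>t - 1. [w * g ^ i mod p = z i] (mod v)"
    using exists_multiplier_with_residues[OF coprime _ assms(9) small] assms(3) by auto
  obtain x where x: "x < p - 1" "g ^ x mod p = w"
    using primroot_power_mod_surj[OF assms(1,6) w(1,2)] .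
  have "(g ^ (x + i) mod p) mod v = z i" if "i < t" for i
  proof -
    have "g ^ (x + i) mod p = w * g ^ i mod p"
      using x(2) by (metis mod_mult_left_eq power_add)
    then show ?thesis
      using w(3) assms(10) that unfolding cong_def by simp
  qed
  then have "x \<in> {x \<in> {0..p-2}. \<forall>i<t. (g ^ (x + i) mod p) mod v = z i}"
    using x(1) by auto
  then show ?thesis
    unfolding lam_def by (auto simp: card_gt_0_iff)
qed

end
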